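(* If a Lindelöf $P$-space $X$ is homeomorphic to a subspace of a separable Hausdorff space, then $w(X)\leq\mathfrak c$.
   Context: A space is a $P$-space if every $G_\delta$-subset is open. $w$ weight, $\mathfrak c=2^\omega$. *)

theory Defs
  imports "HOL-Analysis.Analysis" "HOL-Library.Equipollence"
begin

definition P_space :: "'a topology \<Rightarrow> bool" where
  "P_space X \<equiv> \<forall>S. gdelta_in X S \<longrightarrow> openin X S"

definition base_of :: "'a topology \<Rightarrow> 'a set set \<Rightarrow> bool" where
  "base_of X \<B> \<equiv> (\<forall>V \<in> \<B>. openin X V) \<and>
     (\<forall>U x. openin X U \<and> x \<in> U \<longrightarrow> (\<exists>V \<in> \<B>. x \<in> V \<and> V \<subseteq> U))"

definition weight_le_continuum :: "'a topology \<Rightarrow> bool" where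
  "weight_le_continuum X \<equiv> \<exists>\<B>. base_of X \<B> \<and> \<B> \<lesssim> (UNIV :: real set)"

end

theory Submission
  imports Defs
begin

text \<open>Let \<open>f\<close> be a continuous injection of \<open>X\<close> into \<open>Y\<close> and \<open>D\<close> a countable dense subset of \<open>Y\<close>.
  The open set \<open>trace_open Y D A = Y - cl (D - A)\<close> contains every open \<open>U\<close> with \<open>U \<inter> D \<subseteq> A\<close>,
  and by density disjoint \<open>A\<close>, \<open>B\<close> give disjoint sets. For \<open>x\<close> in an open \<open>G\<close>, separate \<open>f x\<close>
  from each \<open>f z\<close>, \<open>z \<notin> G\<close>, by disjoint open \<open>U_z \<ni> f x\<close> and \<open>V_z \<ni> f z\<close>; as \<open>X - G\<close> is
  Lindelof, countably many \<open>z_n\<close> suffice, and \<open>\<Inter>_n f\<^sup>-\<^sup>1 (trace_open Y D (U_z_n \<inter> D))\<close> is a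
  G-delta, hence open, neighbourhood of \<open>x\<close> inside \<open>G\<close>. These neighbourhoods are indexed by
  sequences of subsets of \<open>D\<close>, of which there are only continuum many.\<close>

definition trace_open :: "'a topology \<Rightarrow> 'a set \<Rightarrow> 'a set \<Rightarrow> 'a set" where
  "trace_open Y D A = topspace Y - Y closure_of (D - A)"

lemma openin_trace_open: "openin Y (trace_open Y D A)"
  unfolding trace_open_def by (intro openin_diff) auto

lemma openin_subset_trace_open:
  assumes "openin Y U"
  shows "U \<subseteq> trace_open Y D (U \<inter> D)"
  using assms openin_subset by (fastforce simp: trace_open_def in_closure_of)

lemma trace_open_Int_subset: "D \<inter> trace_open Y D A \<subseteq> A"
  using closure_of_subset_Int[of Y "D - A"] by (auto simp: trace_open_def)

lemma trace_open_disjoint: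
  assumes "Y closure_of D = topspace Y" and "A \<inter> B = {}"
  shows "trace_open Y D A \<inter> trace_open Y D B = {}"
proof -
  have "D \<inter> (trace_open Y D A \<inter> trace_open Y D B) = {}"
    using trace_open_Int_subset[of D Y A] trace_open_Int_subset[of D Y B] assms(2) by blast
  then show ?thesis
    using assms(1) openin_trace_open by (metis dense_intersects_open openin_Int)
qed

lemma P_space_openin_Inter:
  assumes "P_space X" and "\<And>n::nat. openin X (U n)"
  shows "openin X (topspace X \<inter> (\<Inter>n. U n))"
proof -
  have "gdelta_in X (\<Inter> (range (\<lambda>n. topspace X \<inter> U n)))"
    using assms(2) by (intro gdelta_in_Inter) (auto intro: open_imp_gdelta_in)
  moreover have "\<Inter> (range (\<lambda>n. topspace X \<inter> U n)) = topspace X \<inter> (\<Inter>n. U n)"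
    by auto
  ultimately show ?thesis
    using assms(1) by (simp add: P_space_def)
qed

lemma set_sequences_lepoll_reals:
  assumes "countable D"
  shows "{h :: nat \<Rightarrow> 'a set. \<forall>n. h n \<subseteq> D} \<lesssim> (UNIV :: real set)"
proof -
  let ?S = "{h :: nat \<Rightarrow> 'a set. \<forall>n. h n \<subseteq> D}"
  let ?graph = "\<lambda>h. {(n, d). d \<in> h n}"
  let ?code = "image (to_nat_on (UNIV \<times> D))"
  have "inj_on ?graph ?S"
    by (rule inj_onI) (simp add: set_eq_iff fun_eq_iff)
  moreover have "inj_on ?code (?graph ` ?S)"
    by (rule inj_on_subset[OF inj_on_image_Pow[of _ "UNIV \<times> D"]]) (use assms in auto)
  ultimately have "?S \<lesssim> (UNIV :: nat set set)"
    unfolding lepoll_def by (blast intro: comp_inj_on)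
  then show ?thesis
    using eqpoll_imp_lepoll[OF nat_sets_eqpoll_reals] by (rule lepoll_trans)
qed

lemma Lindelof_countable_separation:
  assumes "Lindelof_space X" and "Hausdorff_space Y"
    and "continuous_map X Y f" and "inj_on f (topspace X)"
    and "closedin X C" and "x \<in> topspace X - C"
  obtains U V :: "nat \<Rightarrow> 'b set"
  where "\<And>n. openin Y (U n)" "\<And>n. openin Y (V n)" "\<And>n. f x \<in> U n" "\<And>n. disjnt (U n) (V n)"
    and "C \<subseteq> (\<Union>n. {z \<in> topspace X. f z \<in> V n})"
proof -
  have "\<exists>U V. openin Y U \<and> openin Y V \<and> f x \<in> U \<and> f z \<in> V \<and> disjnt U V" if "z \<in> C" for z
  proof -
    have "z \<in> topspace X" "z \<noteq> x"
      using that assms(5,6) closedin_subset by auto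
    then have "f x \<noteq> f z" "f x \<in> topspace Y" "f z \<in> topspace Y"
      using assms(3,4,6) inj_onD continuous_map_image_subset_topspace by fastforce+
    then show ?thesis
      using assms(2) unfolding Hausdorff_space_def by blast
  qed
  then obtain U' V' where UV':
    "\<And>z. z \<in> C \<Longrightarrow> openin Y (U' z) \<and> openin Y (V' z) \<and> f x \<in> U' z \<and> f z \<in> V' z \<and> disjnt (U' z) (V' z)"
    by metis
  let ?pre = "\<lambda>z. {w \<in> topspace X. f w \<in> V' z}"
  have "Lindelof_space (subtopology X C)"
    using assms(1,5) by (rule Lindelof_space_closedin_subtopology)
  moreover have "\<forall>U \<in> ?pre ` C. openin X U" and "C \<subseteq> \<Union> (?pre ` C)"
    using UV' assms(3,5) closedin_subset by (fastforce intro: openin_continuous_map_preimage)+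
  ultimately obtain \<V> where \<V>: "countable \<V>" "\<V> \<subseteq> ?pre ` C" "C \<subseteq> \<Union>\<V>"
    using Lindelof_space_subtopology_subset[of C X] assms(5) closedin_subset by meson
  then obtain C' where C': "C' \<subseteq> C" "countable C'" "\<V> = ?pre ` C'"
    using countable_subset_image[THEN iffD1, OF conjI[OF \<V>(1,2)]] by blast
  show thesis
  proof (cases "C' = {}")
    case True
    show thesis
      by (rule that[of "\<lambda>_. topspace Y" "\<lambda>_. {}"])
        (use True C' \<V>(3) assms(3,6) in \<open>auto simp: continuous_map_def\<close>)
  next
    case False
    let ?z = "from_nat_into C'"
    have "?z n \<in> C" for n
      using C'(1) from_nat_into[OF False] by blast
    moreover have "C \<subseteq> (\<Union>n. ?pre (?z n))"
    proof -
      have "\<V> = ?pre ` range ?z"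
        using C'(2,3) False by simp
      then show ?thesis
        using \<V>(3) by simp
    qed
    ultimately show thesis
      using UV' by (intro that[of "U' \<circ> ?z" "V' \<circ> ?z"]) auto
  qed
qed

lemma weight_le_continuum_if_injective_into_separable_Hausdorff:
  assumes "Lindelof_space X" and "P_space X" and "Hausdorff_space Y" and "separable_space Y"
    and f: "continuous_map X Y f" and "inj_on f (topspace X)"
  shows "weight_le_continuum X"
proof -
  obtain D where D: "countable D" "Y closure_of D = topspace Y"
    using assms(4) unfolding separable_space_def by blast
  define B where "B h = topspace X \<inter> (\<Inter>n. {x \<in> topspace X. f x \<in> trace_open Y D (h n)})"
    for h :: "nat \<Rightarrow> 'b set"
  let ?H = "{h. \<forall>n. h n \<subseteq> D}"
  have "base_of X (B ` ?H)"
    unfolding base_of_def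
  proof (intro conjI ballI allI impI)
    fix V assume "V \<in> B ` ?H"
    then show "openin X V"
      unfolding B_def using assms(2) f
      by (auto intro!: P_space_openin_Inter openin_continuous_map_preimage openin_trace_open)
  next
    fix G x assume G: "openin X G \<and> x \<in> G"
    then have x: "x \<in> topspace X - (topspace X - G)"
      using openin_subset by blast
    have closed: "closedin X (topspace X - G)"
      using G by blast
    obtain U V :: "nat \<Rightarrow> 'b set" where U_open: "\<And>n. openin Y (U n)" and "\<And>n. openin Y (V n)"
      and U_mem: "\<And>n. f x \<in> U n" and UV_disjnt: "\<And>n. disjnt (U n) (V n)"
      and cover: "topspace X - G \<subseteq> (\<Union>n. {z \<in> topspace X. f z \<in> V n})"
      using Lindelof_countable_separation[OF assms(1,3) f assms(6) closed x] by blast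
    let ?h = "\<lambda>n. U n \<inter> D"
    have "f x \<in> trace_open Y D (?h n)" for n
      using openin_subset_trace_open[OF U_open] U_mem by blast
    then have "x \<in> B ?h"
      using x by (simp add: B_def)
    moreover have "B ?h \<subseteq> G"
    proof
      fix y assume "y \<in> B ?h"
      then have y: "y \<in> topspace X" "\<And>n. f y \<in> trace_open Y D (U n \<inter> D)"
        by (auto simp: B_def)
      show "y \<in> G"
      proof (rule ccontr)
        assume "y \<notin> G"
        then obtain n where "f y \<in> V n"
          using y(1) cover by blast
        then have "f y \<in> trace_open Y D (V n \<inter> D)"
          using openin_subset_trace_open[OF \<open>openin Y (V n)\<close>] by blast
        moreover have "trace_open Y D (U n \<inter> D) \<inter> trace_open Y D (V n \<inter> D) = {}"
          using UV_disjnt[of n] D(2) by (intro trace_open_disjoint) (auto simp: disjnt_def)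
        ultimately show False
          using y(2)[of n] by blast
      qed
    qed
    ultimately show "\<exists>W \<in> B ` ?H. x \<in> W \<and> W \<subseteq> G"
      by blast
  qed
  moreover have "B ` ?H \<lesssim> (UNIV :: real set)"
    using image_lepoll set_sequences_lepoll_reals[OF D(1)] by (rule lepoll_trans)
  ultimately show ?thesis
    unfolding weight_le_continuum_def by blast
qed

theorem theorem5:
  fixes X :: "'a topology" and Y :: "'b topology" and S :: "'b set"
  assumes "Lindelof_space X" and "P_space X"
    and "Hausdorff_space Y" and "separable_space Y"
    and "X homeomorphic_space subtopology Y S"
  shows "weight_le_continuum X"
proof -
  obtain f where f: "homeomorphic_map X (subtopology Y S) f"
    using assms(5) homeomorphic_space by blast
  then have "continuous_map X Y f"
    using homeomorphic_imp_continuous_map continuous_map_in_subtopology by blast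
  then show ?thesis
    by (rule weight_le_continuum_if_injective_into_separable_Hausdorff[OF assms(1-4) _
          homeomorphic_imp_injective_map[OF f]])
qed

end
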